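(* Let $\mathcal{A}$ be a central and essential arrangement in $\mathbb{Q}^l$ as in the context, with $\lcm$-period $\rho_0$. If a prime $p$ is not good for $\mathcal{A}$, then $p$ divides $\rho_0$.
   Context: $\mathcal{A}=\{H_1,\dots,H_n\}$: $n$ distinct linear hyperplanes in $\mathbb{Q}^l$ with $\bigcap H_i=\{0\}$, $H_i=\{\alpha_i=0\}$, $\alpha_i=\sum_{k=1}^lc_{ki}x_k$ with $c_{ki}\in\mathbb{Z}$ not all divisible by any prime. $p$ is good for $\mathcal{A}$ if the reduction mod $p$ of $\prod\alpha_i$ is reduced, equivalently no reduction $(\alpha_i)_p$ is a scalar multiple of $(\alpha_j)_p$ for $i<j$. Let $C=(c_{ki})\in\mathrm{Mat}_{l\times n}(\mathbb{Z})$ with columns $c_1,\dots,c_n$; for nonempty $J=\{i_1<\dots<i_k\}\subseteq[n]$, $C_J=(c_{i_1},\dots,c_{i_k})$. Its Smith normal form has nonzero diagonal entries $e_{J,1}\mid\dots\mid e_{J,r}$ (positive), $r=\mathrm{rk}(C_J)$; set $e(J)=e_{J,r}$. The $\lcm$-period is $\rho_0=\lcm\{e(J): J\subseteq[n],\ 1\le|J|\le l\}$. *)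

theory Defs
  imports "Jordan_Normal_Form.Determinant" "HOL-Computational_Algebra.Primes" "HOL-Number_Theory.Cong"
begin

text \<open>Arrangement data: an integer l x n matrix C whose i-th column holds the
  coefficients of alpha_i = sum_k c_ki x_k. Indices are 0-based.\<close>

definition primitive_columns :: "int mat \<Rightarrow> bool" where
  "primitive_columns C \<longleftrightarrow>
     (\<forall>i<dim_col C. \<forall>p::int. prime p \<longrightarrow> \<not> (\<forall>k<dim_row C. p dvd C $$ (k, i)))"

definition distinct_hyperplanes :: "int mat \<Rightarrow> bool" where
  "distinct_hyperplanes C \<longleftrightarrow>
     (\<forall>i j. i < j \<longrightarrow> j < dim_col C \<longrightarrow>
        \<not> (\<exists>q::rat. \<forall>k<dim_row C. rat_of_int (C $$ (k, j)) = q * rat_of_int (C $$ (k, i))))"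

definition essential_arr :: "int mat \<Rightarrow> bool" where
  "essential_arr C \<longleftrightarrow>
     (\<forall>x::nat \<Rightarrow> rat. (\<forall>i<dim_col C. (\<Sum>k<dim_row C. rat_of_int (C $$ (k, i)) * x k) = 0)
        \<longrightarrow> (\<forall>k<dim_row C. x k = 0))"

definition good_prime :: "int mat \<Rightarrow> nat \<Rightarrow> bool" where
  "good_prime C p \<longleftrightarrow>
     \<not> (\<exists>i j. i < j \<and> j < dim_col C \<and>
          (\<exists>c::int. \<forall>k<dim_row C. [C $$ (k, i) = c * C $$ (k, j)] (mod int p)))"

definition col_submat :: "int mat \<Rightarrow> nat set \<Rightarrow> int mat" where
  "col_submat C J = mat (dim_row C) (card J) (\<lambda>(k, t). C $$ (k, sorted_list_of_set J ! t))"

definition is_smith_form :: "int mat \<Rightarrow> int mat \<Rightarrow> nat \<Rightarrow> (nat \<Rightarrow> int) \<Rightarrow> bool" where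
  "is_smith_form A D r e \<longleftrightarrow>
     (\<exists>P Q. P \<in> carrier_mat (dim_row A) (dim_row A) \<and> Q \<in> carrier_mat (dim_col A) (dim_col A) \<and>
        (det P = 1 \<or> det P = -1) \<and> (det Q = 1 \<or> det Q = -1) \<and> P * A * Q = D) \<and>
     D \<in> carrier_mat (dim_row A) (dim_col A) \<and>
     r \<le> min (dim_row A) (dim_col A) \<and>
     (\<forall>i<dim_row A. \<forall>j<dim_col A. i \<noteq> j \<longrightarrow> D $$ (i, j) = 0) \<and>
     (\<forall>i<r. D $$ (i, i) = e i \<and> e i > 0) \<and>
     (\<forall>i. i + 1 < r \<longrightarrow> e i dvd e (i + 1)) \<and>
     (\<forall>i. r \<le> i \<and> i < min (dim_row A) (dim_col A) \<longrightarrow> D $$ (i, i) = 0)"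

definition last_inv_factor :: "int mat \<Rightarrow> int" where
  "last_inv_factor A = (SOME x. \<exists>D r e. is_smith_form A D r e \<and> r \<ge> 1 \<and> x = e (r - 1))"

definition lcm_period :: "int mat \<Rightarrow> int" where
  "lcm_period C = Lcm {last_inv_factor (col_submat C J) | J.
      J \<subseteq> {0..<dim_col C} \<and> 1 \<le> card J \<and> card J \<le> dim_row C}"

end

theory Submission
  imports Defs "Jordan_Normal_Form.Column_Operations"
begin

text \<open>If p is not good, two columns of C become proportional modulo p, say c_i = c * c_j (mod p).
  The l x 2 matrix A = C_{i,j} has rank 2 over Q because the hyperplanes are distinct, whereas
  v = (1, -c) lies in its kernel modulo p. Take a Smith form P A Q = diag(e_1, e_2) and put
  u = adj(Q) v, so that Q u = det Q v with det Q = 1 or -1. Then diag(e_1, e_2) u = P A (det Q v)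
  vanishes modulo p; if p did not divide e_2, it would not divide e_1 either, forcing u and hence v
  to vanish modulo p, which fails in the first coordinate. So p divides e({i,j}), which divides the
  lcm-period. Since e(J) is defined by choice, existence of Smith forms is also needed; it follows
  from the classical elimination whose pivot is an entry of least absolute value among all
  unimodularly equivalent matrices.\<close>

section \<open>Unimodular equivalence\<close>

definition unimodular_equiv :: "int mat \<Rightarrow> int mat \<Rightarrow> bool" where
  "unimodular_equiv A B \<longleftrightarrow>
     (\<exists>P Q. P \<in> carrier_mat (dim_row A) (dim_row A) \<and> Q \<in> carrier_mat (dim_col A) (dim_col A) \<and>
        (det P = 1 \<or> det P = -1) \<and> (det Q = 1 \<or> det Q = -1) \<and> P * A * Q = B)"

lemma unimodular_equiv_refl: "unimodular_equiv A A"
  unfolding unimodular_equiv_def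
  by (rule exI[of _ "1\<^sub>m (dim_row A)"], rule exI[of _ "1\<^sub>m (dim_col A)"]) auto

lemma unimodular_equiv_dims:
  assumes "unimodular_equiv A B"
  shows "dim_row B = dim_row A" "dim_col B = dim_col A"
  using assms unfolding unimodular_equiv_def by auto

lemma unimodular_equiv_trans:
  assumes AB: "unimodular_equiv A B" and BC: "unimodular_equiv B C"
  shows "unimodular_equiv A C"
proof -
  obtain P Q where P: "P \<in> carrier_mat (dim_row A) (dim_row A)" "det P = 1 \<or> det P = -1"
    and Q: "Q \<in> carrier_mat (dim_col A) (dim_col A)" "det Q = 1 \<or> det Q = -1"
    and B: "P * A * Q = B"
    using AB unfolding unimodular_equiv_def by auto
  obtain P' Q' where P': "P' \<in> carrier_mat (dim_row A) (dim_row A)" "det P' = 1 \<or> det P' = -1"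
    and Q': "Q' \<in> carrier_mat (dim_col A) (dim_col A)" "det Q' = 1 \<or> det Q' = -1"
    and C: "P' * B * Q' = C"
    using BC unimodular_equiv_dims[OF AB] unfolding unimodular_equiv_def by auto
  have A: "A \<in> carrier_mat (dim_row A) (dim_col A)" by simp
  have PA: "P * A \<in> carrier_mat (dim_row A) (dim_col A)"
    and P'PA: "P' * P * A \<in> carrier_mat (dim_row A) (dim_col A)"
    using P P' by auto
  have "P' * (P * A * Q) = P' * P * A * Q"
    using assoc_mult_mat[OF P'(1) PA Q(1)] assoc_mult_mat[OF P'(1) P(1) A] by simp
  then have "C = P' * P * A * Q * Q'"
    using B C by simp
  also have "\<dots> = (P' * P) * A * (Q * Q')"
    using assoc_mult_mat[OF P'PA Q(1) Q'(1)] .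
  finally have "C = (P' * P) * A * (Q * Q')" .
  moreover have "det (P' * P) = 1 \<or> det (P' * P) = -1" "det (Q * Q') = 1 \<or> det (Q * Q') = -1"
    using P Q P' Q' by (auto simp: det_mult)
  ultimately show ?thesis
    unfolding unimodular_equiv_def using P Q P' Q' by (intro exI[of _ "P' * P"] exI[of _ "Q * Q'"]) auto
qed

lemma unimodular_equiv_left:
  assumes "E \<in> carrier_mat (dim_row A) (dim_row A)" "det E = 1 \<or> det E = -1"
  shows "unimodular_equiv A (E * A)"
  unfolding unimodular_equiv_def using assms
  by (intro exI[of _ E] exI[of _ "1\<^sub>m (dim_col A)"]) auto

lemma unimodular_equiv_right:
  assumes "E \<in> carrier_mat (dim_col A) (dim_col A)" "det E = 1 \<or> det E = -1"
  shows "unimodular_equiv A (A * E)"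
  unfolding unimodular_equiv_def using assms
  by (intro exI[of _ "1\<^sub>m (dim_row A)"] exI[of _ E]) auto

lemma unimodular_equiv_addrow:
  assumes "k \<noteq> k'" "k' < dim_row A"
  shows "unimodular_equiv A (addrow a k k' A)"
proof -
  have "addrow a k k' A = addrow_mat (dim_row A) a k k' * A"
    using assms by (intro addrow_mat) auto
  then show ?thesis
    using assms unimodular_equiv_left[of "addrow_mat (dim_row A) a k k'" A] by (simp add: det_addrow_mat)
qed

lemma unimodular_equiv_swaprows:
  assumes "k < dim_row A" "k' < dim_row A"
  shows "unimodular_equiv A (swaprows k k' A)"
proof (cases "k = k'")
  case True
  then have "swaprows k k' A = A" by (intro eq_matI) auto
  then show ?thesis by (simp add: unimodular_equiv_refl)
next
  case False
  have "swaprows k k' A = swaprows_mat (dim_row A) k k' * A"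
    using assms by (intro swaprows_mat) auto
  then show ?thesis
    using assms False unimodular_equiv_left[of "swaprows_mat (dim_row A) k k'" A]
    by (simp add: det_swaprows_mat)
qed

lemma unimodular_equiv_multrow:
  assumes "k < dim_row A" "a = 1 \<or> a = -1"
  shows "unimodular_equiv A (multrow k a A)"
proof -
  have "multrow k a A = multrow_mat (dim_row A) k a * A"
    by (intro multrow_mat) auto
  then show ?thesis
    using assms unimodular_equiv_left[of "multrow_mat (dim_row A) k a" A] by (auto simp: det_multrow_mat)
qed

lemma unimodular_equiv_addcol:
  assumes "j \<noteq> j'" "j' < dim_col A"
  shows "unimodular_equiv A (addcol a j j' A)"
proof -
  have "addcol a j j' A = A * addrow_mat (dim_col A) a j' j"
    using assms by (intro addcol_mat) auto
  then show ?thesis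
    using assms unimodular_equiv_right[of "addrow_mat (dim_col A) a j' j" A] by (simp add: det_addrow_mat)
qed

lemma unimodular_equiv_swapcols:
  assumes "j < dim_col A" "j' < dim_col A"
  shows "unimodular_equiv A (swapcols j j' A)"
proof (cases "j = j'")
  case True
  then have "swapcols j j' A = A" by (intro eq_matI) auto
  then show ?thesis by (simp add: unimodular_equiv_refl)
next
  case False
  have "swapcols j j' A = A * swaprows_mat (dim_col A) j j'"
    using assms by (intro swapcols_mat) auto
  then show ?thesis
    using assms False unimodular_equiv_right[of "swaprows_mat (dim_col A) j j'" A]
    by (simp add: det_swaprows_mat)
qed

section \<open>Existence of Smith normal forms\<close>

definition smith_prefix :: "nat \<Rightarrow> int mat \<Rightarrow> bool" where
  "smith_prefix i D \<longleftrightarrow> i \<le> min (dim_row D) (dim_col D) \<and>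
     (\<forall>a<dim_row D. \<forall>b<dim_col D. a \<noteq> b \<and> min a b < i \<longrightarrow> D $$ (a, b) = 0) \<and>
     (\<forall>a<i. 0 < D $$ (a, a) \<and>
        (\<forall>k<dim_row D. \<forall>j<dim_col D. a < k \<and> a < j \<longrightarrow> D $$ (a, a) dvd D $$ (k, j)))"

lemma smith_prefix_0: "smith_prefix 0 A"
  unfolding smith_prefix_def by simp

lemma smith_prefix_offdiag:
  "smith_prefix i D \<Longrightarrow> a < dim_row D \<Longrightarrow> b < dim_col D \<Longrightarrow> a \<noteq> b \<Longrightarrow> min a b < i \<Longrightarrow>
    D $$ (a, b) = 0"
  unfolding smith_prefix_def by blast

lemma smith_prefix_change_block:
  assumes D: "smith_prefix i D"
    and dims: "dim_row D' = dim_row D" "dim_col D' = dim_col D"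
    and outside: "\<And>a b. a < dim_row D \<Longrightarrow> b < dim_col D \<Longrightarrow> a < i \<or> b < i \<Longrightarrow>
      D' $$ (a, b) = D $$ (a, b)"
    and block: "\<And>c k j.
      (\<And>k j. k < dim_row D \<Longrightarrow> j < dim_col D \<Longrightarrow> i \<le> k \<Longrightarrow> i \<le> j \<Longrightarrow> c dvd D $$ (k, j)) \<Longrightarrow>
      k < dim_row D \<Longrightarrow> j < dim_col D \<Longrightarrow> i \<le> k \<Longrightarrow> i \<le> j \<Longrightarrow> c dvd D' $$ (k, j)"
  shows "smith_prefix i D'"
proof -
  have i: "i \<le> min (dim_row D) (dim_col D)"
    and pos: "\<And>a. a < i \<Longrightarrow> 0 < D $$ (a, a)"
    and dvd: "\<And>a k j. a < i \<Longrightarrow> k < dim_row D \<Longrightarrow> j < dim_col D \<Longrightarrow> a < k \<and> a < j \<Longrightarrow>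
      D $$ (a, a) dvd D $$ (k, j)"
    using D unfolding smith_prefix_def by blast+
  show ?thesis
    unfolding smith_prefix_def dims
  proof (intro conjI allI impI)
    fix a b assume "a < dim_row D" "b < dim_col D" "a \<noteq> b \<and> min a b < i"
    then show "D' $$ (a, b) = 0"
      using outside smith_prefix_offdiag[OF D] by (simp add: min_less_iff_disj)
  next
    fix a assume "a < i"
    then show "0 < D' $$ (a, a)" using i pos outside by simp
  next
    fix a k j assume akj: "a < i" "k < dim_row D" "j < dim_col D" "a < k \<and> a < j"
    have "D' $$ (a, a) = D $$ (a, a)" using akj i outside by simp
    moreover have "D $$ (a, a) dvd D' $$ (k, j)"
    proof (cases "k < i \<or> j < i")
      case True
      then show ?thesis using akj outside dvd by simp
    next
      case False
      then show ?thesis using akj by (intro block dvd) auto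
    qed
    ultimately show "D' $$ (a, a) dvd D' $$ (k, j)" by simp
  qed (use i in simp)
qed

lemma smith_prefix_addrow:
  assumes D: "smith_prefix i D" and k: "i \<le> k" "i \<le> k'" "k' < dim_row D"
  shows "smith_prefix i (addrow a k k' D)"
proof (rule smith_prefix_change_block[OF D])
  fix x y assume "x < dim_row D" "y < dim_col D" "x < i \<or> y < i"
  then show "addrow a k k' D $$ (x, y) = D $$ (x, y)"
    using k smith_prefix_offdiag[OF D, of k' y] by auto
qed (use k in \<open>auto intro!: dvd_add dvd_mult\<close>)

lemma smith_prefix_swaprows:
  assumes D: "smith_prefix i D" and k: "i \<le> k" "i \<le> k'" "k < dim_row D" "k' < dim_row D"
  shows "smith_prefix i (swaprows k k' D)"
proof (rule smith_prefix_change_block[OF D])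
  fix x y assume "x < dim_row D" "y < dim_col D" "x < i \<or> y < i"
  then show "swaprows k k' D $$ (x, y) = D $$ (x, y)"
    using k smith_prefix_offdiag[OF D, of k' y] smith_prefix_offdiag[OF D, of k y] by auto
qed (use k in auto)

lemma smith_prefix_addcol:
  assumes D: "smith_prefix i D" and j: "i \<le> j" "i \<le> j'" "j' < dim_col D"
  shows "smith_prefix i (addcol a j j' D)"
proof (rule smith_prefix_change_block[OF D])
  fix x y assume "x < dim_row D" "y < dim_col D" "x < i \<or> y < i"
  then show "addcol a j j' D $$ (x, y) = D $$ (x, y)"
    using j smith_prefix_offdiag[OF D, of x j'] by auto
qed (use j in \<open>auto intro!: dvd_add dvd_mult\<close>)

lemma smith_prefix_swapcols:
  assumes D: "smith_prefix i D" and j: "i \<le> j" "i \<le> j'" "j < dim_col D" "j' < dim_col D"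
  shows "smith_prefix i (swapcols j j' D)"
proof (rule smith_prefix_change_block[OF D])
  fix x y assume "x < dim_row D" "y < dim_col D" "x < i \<or> y < i"
  then show "swapcols j j' D $$ (x, y) = D $$ (x, y)"
    using j smith_prefix_offdiag[OF D, of x j'] smith_prefix_offdiag[OF D, of x j] by auto
qed (use j in auto)

lemma smith_prefix_multrow:
  assumes D: "smith_prefix i D" and k: "i \<le> k"
  shows "smith_prefix i (multrow k a D)"
proof (rule smith_prefix_change_block[OF D])
  fix x y assume "x < dim_row D" "y < dim_col D" "x < i \<or> y < i"
  then show "multrow k a D $$ (x, y) = D $$ (x, y)"
    using k smith_prefix_offdiag[OF D, of k y] by auto
qed (use k in auto)

lemma smith_prefix_Suc:
  assumes D: "smith_prefix i D" and i: "i < dim_row D" "i < dim_col D" "0 < D $$ (i, i)"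
    and col: "\<And>k. k < dim_row D \<Longrightarrow> i < k \<Longrightarrow> D $$ (k, i) = 0"
    and row: "\<And>j. j < dim_col D \<Longrightarrow> i < j \<Longrightarrow> D $$ (i, j) = 0"
    and dvd: "\<And>k j. k < dim_row D \<Longrightarrow> j < dim_col D \<Longrightarrow> i < k \<Longrightarrow> i < j \<Longrightarrow>
      D $$ (i, i) dvd D $$ (k, j)"
  shows "smith_prefix (Suc i) D"
  unfolding smith_prefix_def
proof (intro conjI allI impI)
  fix a b assume ab: "a < dim_row D" "b < dim_col D" "a \<noteq> b \<and> min a b < Suc i"
  then have "min a b < i \<or> a = i \<and> i < b \<or> b = i \<and> i < a"
    by (auto simp: min_def split: if_splits)
  then show "D $$ (a, b) = 0"
    using smith_prefix_offdiag[OF D] col row ab by auto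
next
  fix a assume "a < Suc i"
  then show "0 < D $$ (a, a)"
    using D i unfolding smith_prefix_def by (auto simp: less_Suc_eq)
next
  fix a k j assume "a < Suc i" "k < dim_row D" "j < dim_col D" "a < k \<and> a < j"
  then show "D $$ (a, a) dvd D $$ (k, j)"
    using D dvd unfolding smith_prefix_def by (auto simp: less_Suc_eq)
qed (use i in simp)

definition smith_stage :: "int mat \<Rightarrow> nat \<Rightarrow> int mat \<Rightarrow> bool" where
  "smith_stage A i B \<longleftrightarrow> unimodular_equiv A B \<and> smith_prefix i B"

lemma smith_stage_addrow:
  assumes "smith_stage A i B" "i \<le> k" "i \<le> k'" "k \<noteq> k'" "k' < dim_row B"
  shows "smith_stage A i (addrow a k k' B)"
  using assms unimodular_equiv_trans[OF _ unimodular_equiv_addrow[of k k' B a]]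
    smith_prefix_addrow[of i B k k' a]
  unfolding smith_stage_def by auto

lemma smith_stage_swaprows:
  assumes "smith_stage A i B" "i \<le> k" "i \<le> k'" "k < dim_row B" "k' < dim_row B"
  shows "smith_stage A i (swaprows k k' B)"
  using assms unimodular_equiv_trans[OF _ unimodular_equiv_swaprows[of k B k']]
    smith_prefix_swaprows[of i B k k']
  unfolding smith_stage_def by auto

lemma smith_stage_addcol:
  assumes "smith_stage A i B" "i \<le> j" "i \<le> j'" "j \<noteq> j'" "j' < dim_col B"
  shows "smith_stage A i (addcol a j j' B)"
  using assms unimodular_equiv_trans[OF _ unimodular_equiv_addcol[of j j' B a]]
    smith_prefix_addcol[of i B j j' a]
  unfolding smith_stage_def by auto

lemma smith_stage_swapcols:
  assumes "smith_stage A i B" "i \<le> j" "i \<le> j'" "j < dim_col B" "j' < dim_col B"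
  shows "smith_stage A i (swapcols j j' B)"
  using assms unimodular_equiv_trans[OF _ unimodular_equiv_swapcols[of j B j']]
    smith_prefix_swapcols[of i B j j']
  unfolding smith_stage_def by auto

lemma smith_stage_multrow:
  assumes "smith_stage A i B" "i \<le> k" "k < dim_row B" "a = 1 \<or> a = -1"
  shows "smith_stage A i (multrow k a B)"
  using assms unimodular_equiv_trans[OF _ unimodular_equiv_multrow[of k B a]]
    smith_prefix_multrow[of i B k a]
  unfolding smith_stage_def by auto

lemma smith_stage_dims: "smith_stage A i B \<Longrightarrow> dim_row B = dim_row A \<and> dim_col B = dim_col A"
  unfolding smith_stage_def by (auto dest: unimodular_equiv_dims)

definition minimal_pivot :: "int mat \<Rightarrow> nat \<Rightarrow> int \<Rightarrow> bool" where
  "minimal_pivot A i d \<longleftrightarrow> d \<noteq> 0 \<and>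
     (\<forall>B. smith_stage A i B \<and> B $$ (i, i) \<noteq> 0 \<longrightarrow> \<bar>d\<bar> \<le> \<bar>B $$ (i, i)\<bar>)"

lemma minimal_pivot_dvd_col:
  assumes d: "minimal_pivot A i d" and B: "smith_stage A i B" "B $$ (i, i) = d"
    and k: "i \<le> k" "k < dim_row B" and i: "i < dim_col B"
  shows "d dvd B $$ (k, i)"
proof (rule ccontr)
  assume nd: "\<not> d dvd B $$ (k, i)"
  then have "k \<noteq> i" using B by auto
  define B' where "B' = swaprows i k (addrow (- (B $$ (k, i) div d)) k i B)"
  have "smith_stage A i B'"
    unfolding B'_def using B k \<open>k \<noteq> i\<close> by (intro smith_stage_swaprows smith_stage_addrow) auto
  moreover have "B' $$ (i, i) = B $$ (k, i) mod d"
    unfolding B'_def using B k i by (simp add: minus_div_mult_eq_mod[symmetric])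
  moreover have "B $$ (k, i) mod d \<noteq> 0"
    using nd by (simp add: dvd_eq_mod_eq_0)
  ultimately have "\<bar>d\<bar> \<le> \<bar>B $$ (k, i) mod d\<bar>"
    using d unfolding minimal_pivot_def by metis
  moreover have "\<bar>B $$ (k, i) mod d\<bar> < \<bar>d\<bar>"
    using d abs_mod_less unfolding minimal_pivot_def by blast
  ultimately show False by linarith
qed

lemma minimal_pivot_dvd_row:
  assumes d: "minimal_pivot A i d" and B: "smith_stage A i B" "B $$ (i, i) = d"
    and j: "i \<le> j" "j < dim_col B" and i: "i < dim_row B"
  shows "d dvd B $$ (i, j)"
proof (rule ccontr)
  assume nd: "\<not> d dvd B $$ (i, j)"
  then have "j \<noteq> i" using B by auto
  define B' where "B' = swapcols i j (addcol (- (B $$ (i, j) div d)) j i B)"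
  have "smith_stage A i B'"
    unfolding B'_def using B j \<open>j \<noteq> i\<close> by (intro smith_stage_swapcols smith_stage_addcol) auto
  moreover have "B' $$ (i, i) = B $$ (i, j) mod d"
    unfolding B'_def using B j i by (simp add: minus_div_mult_eq_mod[symmetric])
  moreover have "B $$ (i, j) mod d \<noteq> 0"
    using nd by (simp add: dvd_eq_mod_eq_0)
  ultimately have "\<bar>d\<bar> \<le> \<bar>B $$ (i, j) mod d\<bar>"
    using d unfolding minimal_pivot_def by metis
  moreover have "\<bar>B $$ (i, j) mod d\<bar> < \<bar>d\<bar>"
    using d abs_mod_less unfolding minimal_pivot_def by blast
  ultimately show False by linarith
qed

lemma minimal_pivot_clear_col:
  assumes d: "minimal_pivot A i d" and B: "smith_stage A i B" "B $$ (i, i) = d"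
    and i: "i < dim_row A" "i < dim_col A"
  obtains B' where "smith_stage A i B'" "B' $$ (i, i) = d"
    "\<And>k. k < dim_row A \<Longrightarrow> i < k \<Longrightarrow> B' $$ (k, i) = 0"
proof -
  have "\<exists>B'. smith_stage A i B' \<and> B' $$ (i, i) = d \<and>
    (\<forall>k<t. k < dim_row A \<longrightarrow> i < k \<longrightarrow> B' $$ (k, i) = 0)" for t
  proof (induction t)
    case 0
    then show ?case using B by auto
  next
    case (Suc t)
    then obtain B' where B': "smith_stage A i B'" "B' $$ (i, i) = d"
      and zero: "\<forall>k<t. k < dim_row A \<longrightarrow> i < k \<longrightarrow> B' $$ (k, i) = 0" by blast
    have dims: "dim_row B' = dim_row A" "dim_col B' = dim_col A"
      using smith_stage_dims[OF B'(1)] by auto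
    show ?case
    proof (cases "i < t \<and> t < dim_row A")
      case False
      then show ?thesis using B' zero by (intro exI[of _ B']) (auto simp: less_Suc_eq)
    next
      case True
      define B'' where "B'' = addrow (- (B' $$ (t, i) div d)) t i B'"
      have "d dvd B' $$ (t, i)"
        using minimal_pivot_dvd_col[OF d B'] True dims i by auto
      then have "B'' $$ (t, i) = 0"
        unfolding B''_def using B'(2) True dims i by simp
      moreover have "smith_stage A i B''"
        unfolding B''_def using B' True dims by (intro smith_stage_addrow) auto
      moreover have "B'' $$ (i, i) = d" "\<forall>k<t. k < dim_row A \<longrightarrow> i < k \<longrightarrow> B'' $$ (k, i) = 0"
        unfolding B''_def using B' zero True dims i by auto
      ultimately show ?thesis by (intro exI[of _ B'']) (auto simp: less_Suc_eq)
    qed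
  qed
  from this[of "dim_row A"] show ?thesis using that by blast
qed

lemma minimal_pivot_clear_row:
  assumes d: "minimal_pivot A i d" and B: "smith_stage A i B" "B $$ (i, i) = d"
    and i: "i < dim_row A" "i < dim_col A"
    and col: "\<And>k. k < dim_row A \<Longrightarrow> i < k \<Longrightarrow> B $$ (k, i) = 0"
  obtains B' where "smith_stage A i B'" "B' $$ (i, i) = d"
    "\<And>k. k < dim_row A \<Longrightarrow> i < k \<Longrightarrow> B' $$ (k, i) = 0"
    "\<And>j. j < dim_col A \<Longrightarrow> i < j \<Longrightarrow> B' $$ (i, j) = 0"
proof -
  have "\<exists>B'. smith_stage A i B' \<and> B' $$ (i, i) = d \<and>
    (\<forall>k<dim_row A. i < k \<longrightarrow> B' $$ (k, i) = 0) \<and>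
    (\<forall>j<t. j < dim_col A \<longrightarrow> i < j \<longrightarrow> B' $$ (i, j) = 0)" for t
  proof (induction t)
    case 0
    then show ?case using B col by auto
  next
    case (Suc t)
    then obtain B' where B': "smith_stage A i B'" "B' $$ (i, i) = d"
      and col': "\<forall>k<dim_row A. i < k \<longrightarrow> B' $$ (k, i) = 0"
      and zero: "\<forall>j<t. j < dim_col A \<longrightarrow> i < j \<longrightarrow> B' $$ (i, j) = 0" by blast
    have dims: "dim_row B' = dim_row A" "dim_col B' = dim_col A"
      using smith_stage_dims[OF B'(1)] by auto
    show ?case
    proof (cases "i < t \<and> t < dim_col A")
      case False
      then show ?thesis using B' col' zero by (intro exI[of _ B']) (auto simp: less_Suc_eq)
    next
      case True
      define B'' where "B'' = addcol (- (B' $$ (i, t) div d)) t i B'"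
      have "d dvd B' $$ (i, t)"
        using minimal_pivot_dvd_row[OF d B'] True dims i by auto
      then have "B'' $$ (i, t) = 0"
        unfolding B''_def using B'(2) True dims i by simp
      moreover have "smith_stage A i B''"
        unfolding B''_def using B' True dims by (intro smith_stage_addcol) auto
      moreover have "B'' $$ (i, i) = d" "\<forall>k<dim_row A. i < k \<longrightarrow> B'' $$ (k, i) = 0"
        "\<forall>j<t. j < dim_col A \<longrightarrow> i < j \<longrightarrow> B'' $$ (i, j) = 0"
        unfolding B''_def using B' col' zero True dims i by auto
      ultimately show ?thesis by (intro exI[of _ B'']) (auto simp: less_Suc_eq)
    qed
  qed
  from this[of "dim_col A"] show ?thesis using that by blast
qed

lemma minimal_pivot_dvd_block:
  assumes d: "minimal_pivot A i d" and B: "smith_stage A i B" "B $$ (i, i) = d"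
    and col: "\<And>k. k < dim_row A \<Longrightarrow> i < k \<Longrightarrow> B $$ (k, i) = 0"
    and row: "\<And>j. j < dim_col A \<Longrightarrow> i < j \<Longrightarrow> B $$ (i, j) = 0"
    and kj: "i < k" "k < dim_row A" "i < j" "j < dim_col A"
  shows "d dvd B $$ (k, j)"
proof -
  have dims: "dim_row B = dim_row A" "dim_col B = dim_col A"
    using smith_stage_dims[OF B(1)] by auto
  define B' where "B' = addrow 1 i k B"
  have "smith_stage A i B'"
    unfolding B'_def using B kj dims by (intro smith_stage_addrow) auto
  moreover have "B' $$ (i, i) = d" "B' $$ (i, j) = B $$ (k, j)"
    unfolding B'_def using B col row kj dims by auto
  ultimately show ?thesis
    using minimal_pivot_dvd_row[OF d, of B' j] kj dims unfolding B'_def by auto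
qed

lemma minimal_pivot_exists:
  assumes B: "smith_stage A i B"
    and kj: "i \<le> k" "k < dim_row A" "i \<le> j" "j < dim_col A" "B $$ (k, j) \<noteq> 0"
  obtains B' where "smith_stage A i B'" "minimal_pivot A i (B' $$ (i, i))"
proof -
  have dims: "dim_row B = dim_row A" "dim_col B = dim_col A"
    using smith_stage_dims[OF B] by auto
  define B0 where "B0 = swaprows i k (swapcols i j B)"
  have "smith_stage A i B0 \<and> B0 $$ (i, i) \<noteq> 0"
    unfolding B0_def using B kj dims by (auto intro!: smith_stage_swaprows smith_stage_swapcols)
  then obtain B' where B': "smith_stage A i B'" "B' $$ (i, i) \<noteq> 0"
    and least: "\<And>B''. smith_stage A i B'' \<and> B'' $$ (i, i) \<noteq> 0 \<Longrightarrow>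
      nat \<bar>B' $$ (i, i)\<bar> \<le> nat \<bar>B'' $$ (i, i)\<bar>"
    using ex_has_least_nat[of "\<lambda>B. smith_stage A i B \<and> B $$ (i, i) \<noteq> 0" B0
      "\<lambda>B. nat \<bar>B $$ (i, i)\<bar>"] by blast
  have "minimal_pivot A i (B' $$ (i, i))"
    unfolding minimal_pivot_def using B'(2) least by (auto simp: nat_le_eq_zle)
  then show thesis using that B'(1) by blast
qed

lemma minimal_pivot_next_stage:
  assumes d: "minimal_pivot A i d" and B: "smith_stage A i B" "B $$ (i, i) = d"
    and i: "i < dim_row A" "i < dim_col A"
    and col: "\<And>k. k < dim_row A \<Longrightarrow> i < k \<Longrightarrow> B $$ (k, i) = 0"
    and row: "\<And>j. j < dim_col A \<Longrightarrow> i < j \<Longrightarrow> B $$ (i, j) = 0"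
  shows "smith_stage A (Suc i) (multrow i (sgn d) B)"
proof -
  have dims: "dim_row B = dim_row A" "dim_col B = dim_col A"
    using smith_stage_dims[OF B(1)] by auto
  have d0: "d \<noteq> 0" using d unfolding minimal_pivot_def by simp
  have sgn_d: "sgn d * d = \<bar>d\<bar>" by (simp add: sgn_if)
  define B' where "B' = multrow i (sgn d) B"
  have B': "smith_stage A i B'"
    unfolding B'_def using B(1) i dims d0 by (intro smith_stage_multrow) (auto simp: sgn_if)
  have "smith_prefix (Suc i) B'"
  proof (rule smith_prefix_Suc)
    show "smith_prefix i B'" using B' unfolding smith_stage_def by blast
    show "i < dim_row B'" "i < dim_col B'" unfolding B'_def using i dims by auto
    show "0 < B' $$ (i, i)" unfolding B'_def using i dims B(2) d0 sgn_d by simp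
  next
    fix k assume "k < dim_row B'" "i < k"
    then show "B' $$ (k, i) = 0" unfolding B'_def using i dims col by auto
  next
    fix j assume "j < dim_col B'" "i < j"
    then show "B' $$ (i, j) = 0" unfolding B'_def using i dims row by auto
  next
    fix k j assume kj: "k < dim_row B'" "j < dim_col B'" "i < k" "i < j"
    then have "d dvd B $$ (k, j)"
      using minimal_pivot_dvd_block[OF d B col row] dims unfolding B'_def by auto
    then show "B' $$ (i, i) dvd B' $$ (k, j)"
      using kj i dims B(2) sgn_d by (simp add: B'_def)
  qed
  then show ?thesis using B' unfolding B'_def smith_stage_def by blast
qed

lemma smith_stage_step:
  assumes B: "smith_stage A i B"
    and kj: "i \<le> k" "k < dim_row A" "i \<le> j" "j < dim_col A" "B $$ (k, j) \<noteq> 0"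
  obtains B' where "smith_stage A (Suc i) B'"
proof -
  have i: "i < dim_row A" "i < dim_col A" using kj by auto
  obtain B0 where B0: "smith_stage A i B0" and d: "minimal_pivot A i (B0 $$ (i, i))"
    using minimal_pivot_exists[OF B kj] by blast
  obtain B1 where B1: "smith_stage A i B1" "B1 $$ (i, i) = B0 $$ (i, i)"
    "\<And>k. k < dim_row A \<Longrightarrow> i < k \<Longrightarrow> B1 $$ (k, i) = 0"
    using minimal_pivot_clear_col[OF d B0 refl i] by metis
  obtain B2 where "smith_stage A i B2" "B2 $$ (i, i) = B0 $$ (i, i)"
    "\<And>k. k < dim_row A \<Longrightarrow> i < k \<Longrightarrow> B2 $$ (k, i) = 0"
    "\<And>j. j < dim_col A \<Longrightarrow> i < j \<Longrightarrow> B2 $$ (i, j) = 0"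
    using minimal_pivot_clear_row[OF d B1(1,2) i B1(3)] by metis
  then show thesis
    using minimal_pivot_next_stage[OF d _ _ i] that by blast
qed

lemma smith_prefix_is_smith_form:
  assumes D: "unimodular_equiv A D" "smith_prefix r D"
    and zero: "\<And>k j. r \<le> k \<Longrightarrow> k < dim_row A \<Longrightarrow> r \<le> j \<Longrightarrow> j < dim_col A \<Longrightarrow> D $$ (k, j) = 0"
  shows "is_smith_form A D r (\<lambda>a. D $$ (a, a))"
proof -
  have dims: "dim_row D = dim_row A" "dim_col D = dim_col A"
    using unimodular_equiv_dims[OF D(1)] by auto
  have r: "r \<le> min (dim_row A) (dim_col A)"
    and pos: "\<And>a. a < r \<Longrightarrow> 0 < D $$ (a, a)"
    and dvd: "\<And>a k j. a < r \<Longrightarrow> k < dim_row A \<Longrightarrow> j < dim_col A \<Longrightarrow> a < k \<and> a < j \<Longrightarrow>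
      D $$ (a, a) dvd D $$ (k, j)"
    using D(2) dims unfolding smith_prefix_def by auto
  have off: "D $$ (a, b) = 0" if "a < dim_row A" "b < dim_col A" "a \<noteq> b" for a b
  proof (cases "min a b < r")
    case True
    then show ?thesis using smith_prefix_offdiag[OF D(2)] that dims by auto
  qed (use zero that in auto)
  show ?thesis
    unfolding is_smith_form_def
  proof (intro conjI allI impI)
    show "\<exists>P Q. P \<in> carrier_mat (dim_row A) (dim_row A) \<and> Q \<in> carrier_mat (dim_col A) (dim_col A) \<and>
        (det P = 1 \<or> det P = -1) \<and> (det Q = 1 \<or> det Q = -1) \<and> P * A * Q = D"
      using D(1) unfolding unimodular_equiv_def .
    show "D \<in> carrier_mat (dim_row A) (dim_col A)" using dims by auto
  next
    fix a assume "a + 1 < r"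
    then show "D $$ (a, a) dvd D $$ (a + 1, a + 1)" using r by (intro dvd) auto
  qed (use r pos off zero in auto)
qed

theorem smith_form_exists: "\<exists>D r. is_smith_form A D r (\<lambda>a. D $$ (a, a))"
proof -
  have start: "\<exists>B. smith_stage A 0 B"
    using unimodular_equiv_refl smith_prefix_0 unfolding smith_stage_def by blast
  have bound: "i \<le> min (dim_row A) (dim_col A)" if reached: "\<exists>B. smith_stage A i B" for i
  proof -
    obtain B where B: "smith_stage A i B" using reached by blast
    then have "i \<le> min (dim_row B) (dim_col B)"
      unfolding smith_stage_def smith_prefix_def by blast
    then show ?thesis using smith_stage_dims[OF B] by simp
  qed
  obtain r where "\<exists>B. smith_stage A r B" and greatest: "\<And>i. \<exists>B. smith_stage A i B \<Longrightarrow> i \<le> r"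
    using Nat.ex_has_greatest_nat[of "\<lambda>i. \<exists>B. smith_stage A i B" 0 "min (dim_row A) (dim_col A)"]
      start bound by blast
  then obtain D where D: "smith_stage A r D" by blast
  have "D $$ (k, j) = 0" if kj: "r \<le> k" "k < dim_row A" "r \<le> j" "j < dim_col A" for k j
  proof (rule ccontr)
    assume "D $$ (k, j) \<noteq> 0"
    then obtain B' where "smith_stage A (Suc r) B'"
      using smith_stage_step[OF D kj] by blast
    then show False using greatest[of "Suc r"] by auto
  qed
  then show ?thesis
    using smith_prefix_is_smith_form D unfolding smith_stage_def by blast
qed

section \<open>Invariant factors of matrices of full column rank\<close>

lemma mult3_mat_vec:
  assumes "P \<in> carrier_mat n1 n2" "A \<in> carrier_mat n2 n3" "Q \<in> carrier_mat n3 n4" "u \<in> carrier_vec n4"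
  shows "(P * A * Q) *\<^sub>v u = P *\<^sub>v (A *\<^sub>v (Q *\<^sub>v u))"
proof -
  have "(P * A * Q) *\<^sub>v u = (P * A) *\<^sub>v (Q *\<^sub>v u)"
    by (rule assoc_mult_mat_vec) (use assms in auto)
  also have "\<dots> = P *\<^sub>v (A *\<^sub>v (Q *\<^sub>v u))"
    by (rule assoc_mult_mat_vec) (use assms in auto)
  finally show ?thesis .
qed

lemma mult_adj_mat_vec:
  assumes M: "M \<in> carrier_mat n n" and x: "x \<in> carrier_vec n"
  shows "M *\<^sub>v (adj_mat M *\<^sub>v x) = det M \<cdot>\<^sub>v x"
proof -
  have "M *\<^sub>v (adj_mat M *\<^sub>v x) = (M * adj_mat M) *\<^sub>v x"
    using M x adj_mat(1)[OF M] by simp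
  also have "\<dots> = (det M \<cdot>\<^sub>m 1\<^sub>m n) *\<^sub>v x"
    using adj_mat(2)[OF M] by simp
  also have "\<dots> = det M \<cdot>\<^sub>v x"
    using x by auto
  finally show ?thesis .
qed

lemma dvd_mult_mat_vec:
  assumes "\<And>j. j < dim_vec x \<Longrightarrow> p dvd x $ j" "k < dim_row M"
  shows "(p :: 'a :: comm_semiring_1) dvd (M *\<^sub>v x) $ k"
  using assms by (auto simp: scalar_prod_def intro!: dvd_sum)

lemma mult_mat_vec_diagonal:
  assumes D: "D \<in> carrier_mat l m" and x: "x \<in> carrier_vec m"
    and off: "\<And>a b. a < l \<Longrightarrow> b < m \<Longrightarrow> a \<noteq> b \<Longrightarrow> D $$ (a, b) = 0"
    and a: "a < l" "a < m"
  shows "(D *\<^sub>v x) $ a = D $$ (a, a) * x $ a"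
proof -
  have "(D *\<^sub>v x) $ a = (\<Sum>b\<in>{0..<m}. D $$ (a, b) * x $ b)"
    using D x a by (simp add: scalar_prod_def)
  also have "\<dots> = D $$ (a, a) * x $ a"
    using a off by (subst sum.remove[of _ a]) auto
  finally show ?thesis .
qed

lemma smith_form_factor_dvd_last:
  assumes S: "is_smith_form A D r e" and a: "a < r"
  shows "e a dvd e (r - 1)"
proof -
  have "a \<le> r - 1" using a by simp
  then show ?thesis
  proof (induction a rule: inc_induct)
    case (step n)
    then have "e n dvd e (Suc n)"
      using S unfolding is_smith_form_def by auto
    then show ?case using step.IH by (rule dvd_trans)
  qed simp
qed

lemma smith_form_full_column_rank:
  assumes A: "A \<in> carrier_mat l m"
    and ker: "\<And>w. w \<in> carrier_vec m \<Longrightarrow> A *\<^sub>v w = 0\<^sub>v l \<Longrightarrow> w = 0\<^sub>v m"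
    and S: "is_smith_form A D r e"
  shows "r = m"
proof (rule ccontr)
  assume "r \<noteq> m"
  obtain P Q where P: "P \<in> carrier_mat l l" "det P \<noteq> 0" and Q: "Q \<in> carrier_mat m m" "det Q \<noteq> 0"
    and PAQ: "P * A * Q = D"
    using S A unfolding is_smith_form_def by fastforce
  have D: "D \<in> carrier_mat l m" and r: "r < m"
    and off: "\<And>a b. a < l \<Longrightarrow> b < m \<Longrightarrow> a \<noteq> b \<Longrightarrow> D $$ (a, b) = 0"
    and zero: "\<And>a. r \<le> a \<Longrightarrow> a < min l m \<Longrightarrow> D $$ (a, a) = 0"
    using S A \<open>r \<noteq> m\<close> unfolding is_smith_form_def by auto
  define u :: "int vec" where "u = unit_vec m r"
  have u: "u \<in> carrier_vec m" "u \<noteq> 0\<^sub>v m"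
    unfolding u_def using r by (auto simp: vec_eq_iff)
  have "D *\<^sub>v u = 0\<^sub>v l"
  proof (rule eq_vecI)
    fix k assume "k < dim_vec (0\<^sub>v l :: int vec)"
    then have "k < l" by simp
    then show "(D *\<^sub>v u) $ k = 0\<^sub>v l $ k"
      unfolding u_def using D r off zero[of k] by (cases "k = r") auto
  qed (use D in simp)
  moreover have "D *\<^sub>v u = P *\<^sub>v (A *\<^sub>v (Q *\<^sub>v u))"
    unfolding PAQ[symmetric] using P(1) A Q(1) u(1) by (rule mult3_mat_vec)
  ultimately have "P *\<^sub>v (A *\<^sub>v (Q *\<^sub>v u)) = 0\<^sub>v l" by simp
  moreover have "A *\<^sub>v (Q *\<^sub>v u) \<in> carrier_vec l"
    using A Q(1) u(1) by simp
  ultimately have "A *\<^sub>v (Q *\<^sub>v u) = 0\<^sub>v l"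
    using det_0_iff_vec_prod_zero[OF P(1)] P(2) by blast
  then have "Q *\<^sub>v u = 0\<^sub>v m"
    using ker Q(1) u(1) by simp
  then show False
    using det_0_iff_vec_prod_zero[OF Q(1)] Q(2) u by blast
qed

lemma prime_dvd_last_invariant_factor:
  assumes A: "A \<in> carrier_mat l m" and S: "is_smith_form A D m e" and p: "prime p"
    and v: "v \<in> carrier_vec m" "\<And>k. k < l \<Longrightarrow> p dvd (A *\<^sub>v v) $ k"
    and t: "t < m" "\<not> p dvd v $ t"
  shows "p dvd e (m - 1)"
proof (rule ccontr)
  assume last: "\<not> p dvd e (m - 1)"
  obtain P Q where P: "P \<in> carrier_mat l l" and Q: "Q \<in> carrier_mat m m" "det Q = 1 \<or> det Q = -1"
    and PAQ: "P * A * Q = D"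
    using S A unfolding is_smith_form_def by fastforce
  have D: "D \<in> carrier_mat l m" and ml: "m \<le> l"
    and off: "\<And>a b. a < l \<Longrightarrow> b < m \<Longrightarrow> a \<noteq> b \<Longrightarrow> D $$ (a, b) = 0"
    and diag: "\<And>a. a < m \<Longrightarrow> D $$ (a, a) = e a"
    using S A unfolding is_smith_form_def by auto
  define u where "u = adj_mat Q *\<^sub>v v"
  have u: "u \<in> carrier_vec m" unfolding u_def using adj_mat(1)[OF Q(1)] v(1) by simp
  have Qu: "Q *\<^sub>v u = det Q \<cdot>\<^sub>v v"
    unfolding u_def using mult_adj_mat_vec[OF Q(1) v(1)] .
  have "D *\<^sub>v u = P *\<^sub>v (A *\<^sub>v (Q *\<^sub>v u))"
    unfolding PAQ[symmetric] using P A Q(1) u by (rule mult3_mat_vec)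
  then have Du_eq: "D *\<^sub>v u = P *\<^sub>v (A *\<^sub>v (det Q \<cdot>\<^sub>v v))"
    using Qu by simp
  have Av: "p dvd (A *\<^sub>v (det Q \<cdot>\<^sub>v v)) $ k" if "k < l" for k
    using that A v by simp
  have Du: "p dvd (D *\<^sub>v u) $ a" if "a < l" for a
    unfolding Du_eq by (rule dvd_mult_mat_vec) (use that A P Av in auto)
  have "p dvd u $ a" if "a < m" for a
  proof -
    have "p dvd e a * u $ a"
      using Du[of a] mult_mat_vec_diagonal[OF D u off, of a] diag[of a] that ml by simp
    moreover have "\<not> p dvd e a"
      using last smith_form_factor_dvd_last[OF S that] dvd_trans by blast
    ultimately show ?thesis using p by (simp add: prime_dvd_mult_iff)
  qed
  then have "p dvd (Q *\<^sub>v u) $ t"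
    using Q(1) u t(1) by (intro dvd_mult_mat_vec) auto
  then have "p dvd det Q * v $ t"
    using Qu v(1) t(1) by simp
  then show False
    using Q(2) t(2) by auto
qed

lemma last_inv_factor_full_column_rank:
  assumes A: "A \<in> carrier_mat l m" and m: "0 < m"
    and ker: "\<And>w. w \<in> carrier_vec m \<Longrightarrow> A *\<^sub>v w = 0\<^sub>v l \<Longrightarrow> w = 0\<^sub>v m"
  obtains D e where "is_smith_form A D m e" "last_inv_factor A = e (m - 1)"
proof -
  obtain D r where "is_smith_form A D r (\<lambda>a. D $$ (a, a))"
    using smith_form_exists by blast
  moreover from this have "r = m"
    using smith_form_full_column_rank[OF A ker] by blast
  ultimately have "\<exists>x D r e. is_smith_form A D r e \<and> r \<ge> 1 \<and> x = e (r - 1)"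
    using m by (intro exI[of _ "D $$ (m - 1, m - 1)"] exI[of _ D] exI[of _ m]) auto
  from someI_ex[OF this] obtain D' r' e' where S: "is_smith_form A D' r' e'"
    and last: "last_inv_factor A = e' (r' - 1)"
    unfolding last_inv_factor_def by blast
  moreover from S have "r' = m"
    using smith_form_full_column_rank[OF A ker] by blast
  ultimately show thesis using that by blast
qed

lemma last_inv_factor_dvd_lcm_period:
  assumes "J \<subseteq> {0..<dim_col C}" "1 \<le> card J" "card J \<le> dim_row C"
  shows "last_inv_factor (col_submat C J) dvd lcm_period C"
  unfolding lcm_period_def using assms by (intro dvd_Lcm) blast

section \<open>Two-column submatrices of an arrangement\<close>

lemma col_submat_pair:
  assumes C: "C \<in> carrier_mat l n" and ij: "i < j" "j < n"
  shows "col_submat C {i, j} \<in> carrier_mat l 2"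
    and "k < l \<Longrightarrow> col_submat C {i, j} $$ (k, 0) = C $$ (k, i)"
    and "k < l \<Longrightarrow> col_submat C {i, j} $$ (k, 1) = C $$ (k, j)"
proof -
  have "sorted_list_of_set {i, j} = [i, j]" "card {i, j} = 2"
    using ij by auto
  then show "col_submat C {i, j} \<in> carrier_mat l 2"
    and "k < l \<Longrightarrow> col_submat C {i, j} $$ (k, 0) = C $$ (k, i)"
    and "k < l \<Longrightarrow> col_submat C {i, j} $$ (k, 1) = C $$ (k, j)"
    using C unfolding col_submat_def by auto
qed

lemma mult_mat_vec_two_cols:
  "M \<in> carrier_mat l 2 \<Longrightarrow> w \<in> carrier_vec 2 \<Longrightarrow> k < l \<Longrightarrow>
    (M *\<^sub>v w) $ k = M $$ (k, 0) * w $ 0 + M $$ (k, 1) * w $ 1"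
  by (simp add: scalar_prod_def numeral_2_eq_2)

lemma primitive_columns_nonzero:
  assumes "primitive_columns C" "t < dim_col C"
  obtains k where "k < dim_row C" "C $$ (k, t) \<noteq> 0"
proof -
  have "prime (2 :: int)" by simp
  then obtain k where "k < dim_row C" "\<not> 2 dvd C $$ (k, t)"
    using assms unfolding primitive_columns_def by blast
  then show thesis using that by fastforce
qed

lemma distinct_hyperplanes_pair_kernel:
  assumes C: "C \<in> carrier_mat l n" "primitive_columns C" "distinct_hyperplanes C"
    and ij: "i < j" "j < n"
    and w: "w \<in> carrier_vec 2" "col_submat C {i, j} *\<^sub>v w = 0\<^sub>v l"
  shows "w = 0\<^sub>v 2"
proof -
  have lin: "w $ 0 * C $$ (k, i) + w $ 1 * C $$ (k, j) = 0" if "k < l" for k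
  proof -
    have "(col_submat C {i, j} *\<^sub>v w) $ k = 0" using w(2) that by simp
    then show ?thesis
      using mult_mat_vec_two_cols[OF col_submat_pair(1)[OF C(1) ij] w(1) that]
        col_submat_pair(2,3)[OF C(1) ij that] by (simp add: ac_simps)
  qed
  obtain k0 where k0: "k0 < l" "C $$ (k0, i) \<noteq> 0"
    using primitive_columns_nonzero[OF C(2), of i] C(1) ij by auto
  have w1: "w $ 1 = 0"
  proof (rule ccontr)
    assume w1: "w $ 1 \<noteq> 0"
    define q :: rat where "q = - rat_of_int (w $ 0) / rat_of_int (w $ 1)"
    have "rat_of_int (C $$ (k, j)) = q * rat_of_int (C $$ (k, i))" if "k < l" for k
    proof -
      have "rat_of_int (w $ 0) * rat_of_int (C $$ (k, i)) + rat_of_int (w $ 1) * rat_of_int (C $$ (k, j)) = 0"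
        using arg_cong[OF lin[OF that], of rat_of_int] by simp
      then show ?thesis unfolding q_def using w1 by (simp add: field_simps)
    qed
    moreover have "\<not> (\<exists>q. \<forall>k<l. rat_of_int (C $$ (k, j)) = q * rat_of_int (C $$ (k, i)))"
      using C(1,3) ij unfolding distinct_hyperplanes_def by auto
    ultimately show False by blast
  qed
  then have "w $ 0 = 0" using lin[OF k0(1)] k0(2) by simp
  then show ?thesis using w(1) w1 by (intro eq_vecI) (auto simp: less_2_cases_iff)
qed

theorem proposition7p4:
  fixes C :: "int mat" and l n p :: nat
  assumes "C \<in> carrier_mat l n"
    and "primitive_columns C"
    and "distinct_hyperplanes C"
    and "essential_arr C"
    and "prime p"
    and "\<not> good_prime C p"
  shows "int p dvd lcm_period C"
proof -
  obtain i j c where ij: "i < j" "j < n"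
    and cong: "\<And>k. k < l \<Longrightarrow> [C $$ (k, i) = c * C $$ (k, j)] (mod int p)"
    using assms(1,6) unfolding good_prime_def by auto
  define A where "A = col_submat C {i, j}"
  have A: "A \<in> carrier_mat l 2"
    unfolding A_def by (rule col_submat_pair(1)[OF assms(1) ij])
  have ker: "\<And>w. w \<in> carrier_vec 2 \<Longrightarrow> A *\<^sub>v w = 0\<^sub>v l \<Longrightarrow> w = 0\<^sub>v 2"
    unfolding A_def by (rule distinct_hyperplanes_pair_kernel[OF assms(1-3) ij])
  obtain D e where S: "is_smith_form A D 2 e" and last: "last_inv_factor A = e (2 - 1)"
    by (rule last_inv_factor_full_column_rank[OF A _ ker]) simp
  define v :: "int vec" where "v = vec 2 (\<lambda>t. if t = 0 then 1 else - c)"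
  have Av: "int p dvd (A *\<^sub>v v) $ k" if "k < l" for k
    using cong[OF that] mult_mat_vec_two_cols[OF A, of v k] col_submat_pair(2,3)[OF assms(1) ij that] that
    unfolding A_def v_def by (simp add: cong_iff_dvd_diff ac_simps)
  have "int p dvd e (2 - 1)"
    by (rule prime_dvd_last_invariant_factor[OF A S _ _ Av, where t = 0])
      (use assms(5) prime_gt_1_nat[OF assms(5)] in \<open>auto simp: v_def\<close>)
  moreover have "2 \<le> l"
    using S A unfolding is_smith_form_def by auto
  then have "last_inv_factor A dvd lcm_period C"
    unfolding A_def using assms(1) ij by (intro last_inv_factor_dvd_lcm_period) auto
  ultimately show ?thesis using last by (metis dvd_trans)
qed

end
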